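(* Let $P$ and $Q$ be locally finite posets and let $f:P\to Q$, $g:Q\to P$ be order-preserving maps forming a Galois connection $f\dashv g$, i.e. $f(x)\le_Q y \iff x\le_P g(y)$ for all $x\in P$, $y\in Q$. Extend $f$ linearly to a map $\mathbf{k}P\to\mathbf{k}Q$. For $x\in P$ and $a\in Q$ let $\omega_x^P=\sum_{x\le_P y}\mu_P(x,y)\,y$ and $\omega_a^Q=\sum_{a\le_Q b}\mu_Q(a,b)\,b$. Then for every $x\in P$, \[ f(\omega_x^P)=\sum_{a\in Q\,:\,g(a)=x}\omega_a^Q. \]
   Context: $\mathbf{k}$ is a field of characteristic $0$. For a poset $P$, $\mathbf{k}P$ denotes the vector space with basis the elements of $P$ (the linearization of $P$). $\mu_P$ denotes the Möbius function of $P$: $\mu_P(x,x)=1$ and $\mu_P(x,y)=-\sum_{x\le z<y}\mu_P(x,z)$ for $x<y$ (and $0$ if $x\not\le y$). The elements $\omega_x^P$ are called the inverted basis of $\mathbf{k}P$. (Sums are assumed to make sense, e.g. for the relevant posets finite.) *)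

theory Defs
  imports Main "HOL-Library.Poly_Mapping"
begin

class locally_finite_order = order +
  assumes finite_atLeastAtMost_lf: "finite {x..y}"

function mobius :: "'a::locally_finite_order \<Rightarrow> 'a \<Rightarrow> 'k::comm_ring_1" where
  "mobius x y = (if x = y then 1
                 else if x < y then - (\<Sum>z\<in>{x..<y}. mobius x z)
                 else 0)"
  by auto
termination
proof (relation "measure (\<lambda>(x, y). card {x..y})")
  fix x y z :: 'a
  assume "x \<noteq> y" "x < y" "z \<in> {x..<y}"
  then have "{x..z} \<subset> {x..y}" by auto
  then show "((x, z), x, y) \<in> measure (\<lambda>(x, y). card {x..y})"
    by (simp add: psubset_card_mono finite_atLeastAtMost_lf)
qed auto

text \<open>Linearization kP of a poset: finitely supported formal combinations (type a =>0 k).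
  Linear extension of a map f : P to Q to kP to kQ.\<close>
definition lin_ext :: "('a \<Rightarrow> 'b) \<Rightarrow> ('a \<Rightarrow>\<^sub>0 'k::comm_ring_1) \<Rightarrow> ('b \<Rightarrow>\<^sub>0 'k)" where
  "lin_ext f v = (\<Sum>y\<in>Poly_Mapping.keys v. Poly_Mapping.single (f y) (Poly_Mapping.lookup v y))"

definition omega :: "'a::locally_finite_order \<Rightarrow> ('a \<Rightarrow>\<^sub>0 'k::comm_ring_1)" where
  "omega x = (\<Sum>y\<in>{x..}. Poly_Mapping.single y (mobius x y))"

end

theory Submission
  imports Defs
begin

text \<open>Both sides are supported on the up-set of \<open>f x\<close>, and a function supported there is
  determined by its partial sums over the intervals \<open>[f x, c]\<close>. For the left-hand side such a
  partial sum is, by the Galois connection, the sum of \<open>\<mu>\<^sub>P(x, y)\<close> over \<open>y \<in> [x, g c]\<close>; for the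
  right-hand side it is a sum over \<open>a\<close> with \<open>g a = x\<close> of the sums of \<open>\<mu>\<^sub>Q(a, b)\<close> over \<open>b \<in> [a, c]\<close>.
  By the defining recursion of the Moebius function both equal \<open>[g c = x]\<close>.\<close>

declare mobius.simps [simp del]

lemma finite_atLeastLessThan_lf: "finite {x..<y :: 'a::locally_finite_order}"
  by (rule finite_subset[OF _ finite_atLeastAtMost_lf[of x y]]) auto

lemma sum_mobius_atLeastAtMost:
  fixes x y :: "'a::locally_finite_order"
  shows "(\<Sum>z\<in>{x..y}. mobius x z :: 'k::comm_ring_1) = (if x = y then 1 else 0)"
proof (cases "x < y")
  case True
  have "{x..y} = insert y {x..<y}"
    using True by auto
  then have "(\<Sum>z\<in>{x..y}. mobius x z :: 'k) = mobius x y + (\<Sum>z\<in>{x..<y}. mobius x z)"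
    by (simp add: finite_atLeastLessThan_lf)
  also have "mobius x y = - (\<Sum>z\<in>{x..<y}. mobius x z :: 'k)"
    using True by (subst mobius.simps) simp
  finally show ?thesis
    using True by simp
next
  case False
  then show ?thesis
    by (cases "x = y") (auto simp: mobius.simps)
qed

lemma lookup_omega:
  assumes "finite {x..}"
  shows "Poly_Mapping.lookup (omega x :: 'a::locally_finite_order \<Rightarrow>\<^sub>0 'k::comm_ring_1) b
           = (if x \<le> b then mobius x b else 0)"
  using assms unfolding omega_def lookup_sum by (simp add: lookup_single when_def sum.delta)

lemma keys_omega:
  assumes "finite {x..}"
  shows "Poly_Mapping.keys (omega x :: 'a::locally_finite_order \<Rightarrow>\<^sub>0 'k::comm_ring_1) \<subseteq> {x..}"
  by (auto simp: in_keys_iff lookup_omega[OF assms] split: if_splits)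

lemma sum_lookup_omega_atLeastAtMost:
  assumes "finite {a..}" and "l \<le> a"
  shows "(\<Sum>b\<in>{l..c}. Poly_Mapping.lookup (omega a :: 'a::locally_finite_order \<Rightarrow>\<^sub>0 'k::comm_ring_1) b)
           = (if a = c then 1 else 0)"
proof -
  have "{b \<in> {l..c}. a \<le> b} = {a..c}"
    using \<open>l \<le> a\<close> by auto
  then have "(\<Sum>b\<in>{l..c}. Poly_Mapping.lookup (omega a :: 'a \<Rightarrow>\<^sub>0 'k) b) = (\<Sum>b\<in>{a..c}. mobius a b)"
    by (simp add: lookup_omega[OF assms(1)] sum.If_cases finite_atLeastAtMost_lf Int_def)
  then show ?thesis
    by (simp add: sum_mobius_atLeastAtMost)
qed

lemma lookup_lin_ext:
  assumes "finite S" and "Poly_Mapping.keys v \<subseteq> S"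
  shows "Poly_Mapping.lookup (lin_ext f v) b = (\<Sum>y\<in>S. if f y = b then Poly_Mapping.lookup v y else 0)"
proof -
  have "Poly_Mapping.lookup (lin_ext f v) b
          = (\<Sum>y\<in>Poly_Mapping.keys v. if f y = b then Poly_Mapping.lookup v y else 0)"
    unfolding lin_ext_def lookup_sum by (simp add: lookup_single when_def)
  also have "\<dots> = (\<Sum>y\<in>S. if f y = b then Poly_Mapping.lookup v y else 0)"
    by (rule sum.mono_neutral_left) (use assms in \<open>auto simp: in_keys_iff\<close>)
  finally show ?thesis .
qed

lemma keys_lin_ext: "Poly_Mapping.keys (lin_ext f v) \<subseteq> f ` Poly_Mapping.keys v"
  unfolding lin_ext_def
  using keys_sum[of "\<lambda>y. Poly_Mapping.single (f y) (Poly_Mapping.lookup v y)" "Poly_Mapping.keys v"]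
  by auto

lemma sum_lookup_lin_ext_atLeastAtMost:
  fixes f :: "'a \<Rightarrow> 'b::locally_finite_order"
  assumes "finite S" and "Poly_Mapping.keys v \<subseteq> S" and "\<And>y. y \<in> S \<Longrightarrow> l \<le> f y"
  shows "(\<Sum>b\<in>{l..c}. Poly_Mapping.lookup (lin_ext f v) b)
           = (\<Sum>y\<in>{y \<in> S. f y \<le> c}. Poly_Mapping.lookup (v :: 'a \<Rightarrow>\<^sub>0 'k::comm_ring_1) y)"
proof -
  have "(\<Sum>b\<in>{l..c}. Poly_Mapping.lookup (lin_ext f v) b)
          = (\<Sum>y\<in>S. \<Sum>b\<in>{l..c}. if f y = b then Poly_Mapping.lookup v y else 0)"
    unfolding lookup_lin_ext[OF assms(1,2)] by (rule sum.swap)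
  also have "\<dots> = (\<Sum>y\<in>S. if f y \<le> c then Poly_Mapping.lookup v y else 0)"
    using assms(3) by (intro sum.cong) (auto simp: sum.delta' finite_atLeastAtMost_lf)
  finally show ?thesis
    using assms(1) by (simp add: sum.inter_filter)
qed

lemma poly_mapping_eq_if_interval_sums_eq:
  fixes v w :: "'a::locally_finite_order \<Rightarrow>\<^sub>0 'k::cancel_comm_monoid_add"
  assumes "Poly_Mapping.keys v \<subseteq> {l..}" and "Poly_Mapping.keys w \<subseteq> {l..}"
    and sums: "\<And>c. (\<Sum>b\<in>{l..c}. Poly_Mapping.lookup v b) = (\<Sum>b\<in>{l..c}. Poly_Mapping.lookup w b)"
  shows "v = w"
proof (rule poly_mapping_eqI)
  fix c
  show "Poly_Mapping.lookup v c = Poly_Mapping.lookup w c"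
  proof (induction "card {l..c}" arbitrary: c rule: less_induct)
    case less
    show ?case
    proof (cases "l \<le> c")
      case False
      then have "c \<notin> Poly_Mapping.keys v" and "c \<notin> Poly_Mapping.keys w"
        using assms(1,2) by auto
      then show ?thesis
        by (simp add: in_keys_iff)
    next
      case True
      have split: "{l..c} = insert c {l..<c}"
        using True by auto
      have "card {l..b} < card {l..c}" if "b \<in> {l..<c}" for b
        using that by (intro psubset_card_mono finite_atLeastAtMost_lf) auto
      then have "(\<Sum>b\<in>{l..<c}. Poly_Mapping.lookup v b) = (\<Sum>b\<in>{l..<c}. Poly_Mapping.lookup w b)"
        using less by (intro sum.cong) auto
      then show ?thesis
        using sums[of c] by (simp add: split finite_atLeastLessThan_lf)
    qed
  qed
qed

theorem mainTheorem1:
  fixes f :: "'a::locally_finite_order \<Rightarrow> 'b::locally_finite_order"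
    and g :: "'b \<Rightarrow> 'a"
  assumes "mono f" and "mono g"
    and galois: "\<And>x y. f x \<le> y \<longleftrightarrow> x \<le> g y"
    and finP: "\<And>x::'a. finite {x..}"
    and finQ: "\<And>b::'b. finite {b..}"
  shows "lin_ext f (omega x :: 'a \<Rightarrow>\<^sub>0 'k::field_char_0)
           = (\<Sum>a\<in>{a. g a = x}. omega a)"
proof (rule poly_mapping_eq_if_interval_sums_eq)
  let ?A = "{a. g a = x}"
  let ?L = "lin_ext f (omega x) :: 'b \<Rightarrow>\<^sub>0 'k"
  let ?R = "\<Sum>a\<in>?A. omega a :: 'b \<Rightarrow>\<^sub>0 'k"
  have above: "?A \<subseteq> {f x..}"
    using galois by auto
  have geq: "f x \<le> f y" if "y \<in> {x..}" for y
    using \<open>mono f\<close> that by (auto dest: monoD)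
  show "Poly_Mapping.keys ?L \<subseteq> {f x..}"
    using keys_lin_ext[of f "omega x :: 'a \<Rightarrow>\<^sub>0 'k"] keys_omega[OF finP, of x] geq by fastforce
  have "Poly_Mapping.keys (omega a :: 'b \<Rightarrow>\<^sub>0 'k) \<subseteq> {f x..}" if "a \<in> ?A" for a
    using keys_omega[OF finQ, of a] above that by (auto dest: order_trans)
  then show "Poly_Mapping.keys ?R \<subseteq> {f x..}"
    using keys_sum[of omega ?A] by blast
  fix c
  have interval: "{y \<in> {x..}. f y \<le> c} = {x..g c}"
    using galois by auto
  have "(\<Sum>b\<in>{f x..c}. Poly_Mapping.lookup ?L b)
          = (\<Sum>y\<in>{y \<in> {x..}. f y \<le> c}. Poly_Mapping.lookup (omega x :: 'a \<Rightarrow>\<^sub>0 'k) y)"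
    by (rule sum_lookup_lin_ext_atLeastAtMost[OF finP keys_omega[OF finP] geq])
  also have "\<dots> = (if g c = x then 1 else 0)"
    unfolding interval by (simp add: sum_lookup_omega_atLeastAtMost[OF finP] eq_commute)
  also have "\<dots> = (\<Sum>a\<in>?A. if a = c then 1 else 0)"
    using finite_subset[OF above finQ] by (simp add: sum.delta')
  also have "\<dots> = (\<Sum>a\<in>?A. \<Sum>b\<in>{f x..c}. Poly_Mapping.lookup (omega a :: 'b \<Rightarrow>\<^sub>0 'k) b)"
    using above by (intro sum.cong) (auto simp: sum_lookup_omega_atLeastAtMost[OF finQ])
  also have "\<dots> = (\<Sum>b\<in>{f x..c}. Poly_Mapping.lookup ?R b)"
    unfolding lookup_sum by (rule sum.swap)
  finally show "(\<Sum>b\<in>{f x..c}. Poly_Mapping.lookup ?L b) = (\<Sum>b\<in>{f x..c}. Poly_Mapping.lookup ?R b)" .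
qed

end
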